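(* Let $X$ be a real Hilbert space, let $T\colon X\to X$ be averaged nonexpansive and boundedly linearly regular, let $\rho>0$, and let $C$ be a nonempty subset of $\operatorname{Fix}T$. Then there exist $\alpha\in[0,1[$, $\beta\in]0,1]$ and $\gamma>0$ such that for every $x$ with $\|x\|\le\rho$: (a) $d_{\operatorname{Fix}T}(Tx)\le\alpha\,d_{\operatorname{Fix}T}(x)$; (b) $\beta\,d^2_{\operatorname{Fix}T}(x)\le\big(d_{\operatorname{Fix}T}(x)-d_{\operatorname{Fix}T}(Tx)\big)^2\le\|x-Tx\|^2$; (c) $d_C^2(Tx)\le d_C^2(x)-\gamma\,d^2_{\operatorname{Fix}T}(x)$. If $T$ is linearly regular, these constants can be chosen independently of $\rho$.
   Context: $T$ is averaged nonexpansive if $T=(1-\lambda)\mathrm{Id}+\lambda N$ with $\lambda\in[0,1[$ and $N$ nonexpansive. $T$ with $\operatorname{Fix}T\neq\varnothing$ is linearly regular if there is $\kappa\ge0$ with $d_{\operatorname{Fix}T}(x)\le\kappa\|x-Tx\|$ for all $x$; boundedly linearly regular if for each $\rho>0$ there is $\kappa\ge0$ with this for all $\|x\|\le\rho$. $d_S$ is the distance to $S$. *)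

theory Defs
  imports "HOL-Analysis.Analysis"
begin

definition Fix :: "('a \<Rightarrow> 'a) \<Rightarrow> 'a set" where
  "Fix T = {x. T x = x}"

definition nonexpansive :: "('a::real_normed_vector \<Rightarrow> 'a) \<Rightarrow> bool" where
  "nonexpansive N \<longleftrightarrow> (\<forall>x y. norm (N x - N y) \<le> norm (x - y))"

definition averaged_nonexpansive :: "('a::real_normed_vector \<Rightarrow> 'a) \<Rightarrow> bool" where
  "averaged_nonexpansive T \<longleftrightarrow>
     (\<exists>l N. 0 \<le> l \<and> l < 1 \<and> nonexpansive N \<and>
            T = (\<lambda>x. (1 - l) *\<^sub>R x + l *\<^sub>R N x))"

definition linearly_regular :: "('a::real_normed_vector \<Rightarrow> 'a) \<Rightarrow> bool" where
  "linearly_regular T \<longleftrightarrow> Fix T \<noteq> {} \<and>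
     (\<exists>\<kappa>\<ge>0. \<forall>x. infdist x (Fix T) \<le> \<kappa> * norm (x - T x))"

definition boundedly_linearly_regular :: "('a::real_normed_vector \<Rightarrow> 'a) \<Rightarrow> bool" where
  "boundedly_linearly_regular T \<longleftrightarrow> Fix T \<noteq> {} \<and>
     (\<forall>\<rho>>0. \<exists>\<kappa>\<ge>0. \<forall>x. norm x \<le> \<rho> \<longrightarrow> infdist x (Fix T) \<le> \<kappa> * norm (x - T x))"

end

theory Submission
  imports Defs
begin

(* An averaged nonexpansive operator T = (1 - l) Id + l N is strongly
   quasi-nonexpansive: there is c > 0 such that for every fixed point z
     |Tx - z|^2 <= |x - z|^2 - c |x - Tx|^2
   (for 0 < l one takes c = (1 - l)/l; for l = 0, T is the identity).  Taking infima
   over z in any nonempty set S of fixed points gives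
     d_S(Tx)^2 <= d_S(x)^2 - c |x - Tx|^2.
   On a set P on which T is linearly regular with constant k we have
   d_Fix(x)^2 <= k^2 |x - Tx|^2, so with gamma = c/(k^2 + c) in ]0,1] the step
   decreases d_C^2 by gamma d_Fix^2 (part (c)) and d_Fix^2 by the factor 1 - gamma.
   Part (a) follows with alpha = sqrt(1 - gamma), part (b) with beta = (1 - alpha)^2
   together with the 1-Lipschitz property of d_Fix.  The file first proves these
   facts for an arbitrary set P carrying a regularity constant; the theorem is the
   instance P = closed ball of radius rho (bounded regularity) and P = UNIV
   (linear regularity). *)

definition fix_distance_estimates ::
    "('a::real_normed_vector \<Rightarrow> 'a) \<Rightarrow> 'a set \<Rightarrow> 'a set \<Rightarrow> real \<Rightarrow> real \<Rightarrow> real \<Rightarrow> bool" where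
  "fix_distance_estimates T C P \<alpha> \<beta> \<gamma> \<longleftrightarrow>
     0 \<le> \<alpha> \<and> \<alpha> < 1 \<and> 0 < \<beta> \<and> \<beta> \<le> 1 \<and> \<gamma> > 0 \<and>
     (\<forall>x\<in>P.
        infdist (T x) (Fix T) \<le> \<alpha> * infdist x (Fix T) \<and>
        \<beta> * (infdist x (Fix T))\<^sup>2 \<le> (infdist x (Fix T) - infdist (T x) (Fix T))\<^sup>2 \<and>
        (infdist x (Fix T) - infdist (T x) (Fix T))\<^sup>2 \<le> (norm (x - T x))\<^sup>2 \<and>
        (infdist (T x) C)\<^sup>2 \<le> (infdist x C)\<^sup>2 - \<gamma> * (infdist x (Fix T))\<^sup>2)"

definition strongly_quasi_nonexpansive :: "real \<Rightarrow> ('a::real_normed_vector \<Rightarrow> 'a) \<Rightarrow> bool" where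
  "strongly_quasi_nonexpansive c T \<longleftrightarrow>
     (\<forall>x z. z \<in> Fix T \<longrightarrow> (norm (T x - z))\<^sup>2 \<le> (norm (x - z))\<^sup>2 - c * (norm (x - T x))\<^sup>2)"

lemma norm_convex_combination_squared:
  fixes a b :: "'a::real_inner"
  shows "(norm ((1 - l) *\<^sub>R a + l *\<^sub>R b))\<^sup>2 =
     (1 - l) * (norm a)\<^sup>2 + l * (norm b)\<^sup>2 - l * (1 - l) * (norm (a - b))\<^sup>2"
  by (simp add: power2_norm_eq_inner inner_add_left inner_add_right inner_diff_left
      inner_diff_right inner_commute algebra_simps)

lemma averaged_imp_strongly_quasi_nonexpansive:
  fixes T :: "'a::real_inner \<Rightarrow> 'a"
  assumes "averaged_nonexpansive T"
  shows "\<exists>c>0. strongly_quasi_nonexpansive c T"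
proof -
  obtain l N where l: "0 \<le> l" "l < 1" and N: "nonexpansive N"
    and T: "T = (\<lambda>x. (1 - l) *\<^sub>R x + l *\<^sub>R N x)"
    using assms unfolding averaged_nonexpansive_def by blast
  show ?thesis
  proof (cases "l = 0")
    case True
    then have "T x = x" for x using T by simp
    then have "strongly_quasi_nonexpansive 1 T"
      by (simp add: strongly_quasi_nonexpansive_def)
    then show ?thesis by (intro exI[of _ 1]) simp
  next
    case False
    with l have l0: "0 < l" by simp
    have "(norm (T x - z))\<^sup>2 \<le> (norm (x - z))\<^sup>2 - ((1 - l) / l) * (norm (x - T x))\<^sup>2"
      if z: "z \<in> Fix T" for x z
    proof -
      have "l *\<^sub>R N z = l *\<^sub>R z"
        using z T by (simp add: Fix_def algebra_simps)
      then have Nz: "N z = z" using l0 by simp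
      have step: "T x - z = (1 - l) *\<^sub>R (x - z) + l *\<^sub>R (N x - z)"
        using T by (simp add: algebra_simps)
      have displacement: "norm (x - T x) = l * norm (x - N x)"
        using T l0 by (simp add: algebra_simps flip: scaleR_diff_right)
      have "norm (N x - z) \<le> norm (x - z)"
        using N Nz unfolding nonexpansive_def by metis
      then have "l * (norm (N x - z))\<^sup>2 \<le> l * (norm (x - z))\<^sup>2"
        using l0 by (simp add: power_mono)
      moreover have "(norm (T x - z))\<^sup>2 = (1 - l) * (norm (x - z))\<^sup>2 + l * (norm (N x - z))\<^sup>2
          - l * (1 - l) * (norm (x - N x))\<^sup>2"
        unfolding step norm_convex_combination_squared by simp
      moreover have "((1 - l) / l) * (norm (x - T x))\<^sup>2 = l * (1 - l) * (norm (x - N x))\<^sup>2"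
        using l0 by (simp add: displacement power2_eq_square field_simps)
      ultimately show ?thesis by (simp add: algebra_simps)
    qed
    then show ?thesis
      using l l0 unfolding strongly_quasi_nonexpansive_def by (intro exI[of _ "(1 - l) / l"]) auto
  qed
qed

lemma infdist_squared_decrease:
  fixes x y :: "'a::metric_space"
  assumes S: "S \<noteq> {}" and r: "r \<ge> 0"
    and decrease: "\<And>z. z \<in> S \<Longrightarrow> (dist y z)\<^sup>2 \<le> (dist x z)\<^sup>2 - r"
  shows "(infdist y S)\<^sup>2 \<le> (infdist x S)\<^sup>2 - r"
proof -
  have "sqrt ((infdist y S)\<^sup>2 + r) \<le> dist x z" if z: "z \<in> S" for z
  proof -
    have "(infdist y S)\<^sup>2 \<le> (dist y z)\<^sup>2"
      using infdist_le[OF z] by (simp add: infdist_nonneg power_mono)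
    with decrease[OF z] have "(infdist y S)\<^sup>2 + r \<le> (dist x z)\<^sup>2" by simp
    then show ?thesis by (simp add: real_sqrt_le_iff real_le_lsqrt)
  qed
  then have "sqrt ((infdist y S)\<^sup>2 + r) \<le> infdist x S"
    unfolding infdist_notempty[OF S] using S by (intro cINF_greatest) auto
  then have "(infdist y S)\<^sup>2 + r \<le> (infdist x S)\<^sup>2"
    using r by (metis add_nonneg_nonneg real_sqrt_le_iff sqrt_le_D zero_le_power2)
  then show ?thesis by simp
qed

lemma strongly_quasi_nonexpansive_infdist:
  fixes T :: "'a::real_normed_vector \<Rightarrow> 'a"
  assumes sqn: "strongly_quasi_nonexpansive c T" and c: "c \<ge> 0"
    and S: "S \<noteq> {}" "S \<subseteq> Fix T"
  shows "(infdist (T x) S)\<^sup>2 \<le> (infdist x S)\<^sup>2 - c * (norm (x - T x))\<^sup>2"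
  using S(1) c sqn S(2) unfolding strongly_quasi_nonexpansive_def
  by (intro infdist_squared_decrease) (auto simp: dist_norm)

lemma contraction_from_squared_contraction:
  fixes d d' \<gamma> :: real
  assumes "0 \<le> d" "0 \<le> d'" "0 \<le> \<gamma>" "\<gamma> \<le> 1" and sq: "d'\<^sup>2 \<le> (1 - \<gamma>) * d\<^sup>2"
  shows "d' \<le> sqrt (1 - \<gamma>) * d" and "(1 - sqrt (1 - \<gamma>))\<^sup>2 * d\<^sup>2 \<le> (d - d')\<^sup>2"
proof -
  have "(1 - \<gamma>) * d\<^sup>2 = (sqrt (1 - \<gamma>) * d)\<^sup>2"
    using assms by (simp add: power_mult_distrib)
  with sq have "d'\<^sup>2 \<le> (sqrt (1 - \<gamma>) * d)\<^sup>2" by simp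
  then show a: "d' \<le> sqrt (1 - \<gamma>) * d"
    by (rule power2_le_imp_le) (use assms in simp)
  have "sqrt (1 - \<gamma>) \<le> 1" using assms by simp
  then have "0 \<le> (1 - sqrt (1 - \<gamma>)) * d" using assms by simp
  moreover have "(1 - sqrt (1 - \<gamma>)) * d \<le> d - d'"
    using a by (simp add: algebra_simps)
  ultimately show "(1 - sqrt (1 - \<gamma>))\<^sup>2 * d\<^sup>2 \<le> (d - d')\<^sup>2"
    by (metis power_mono power_mult_distrib)
qed

lemma fix_distance_estimates_on_regular_set:
  fixes T :: "'a::real_inner \<Rightarrow> 'a"
  assumes avg: "averaged_nonexpansive T"
    and C: "C \<noteq> {}" "C \<subseteq> Fix T"
    and regular: "\<And>x. x \<in> P \<Longrightarrow> infdist x (Fix T) \<le> k * norm (x - T x)"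
  shows "\<exists>\<alpha> \<beta> \<gamma>. fix_distance_estimates T C P \<alpha> \<beta> \<gamma>"
proof -
  obtain c where c: "c > 0" and sqn: "strongly_quasi_nonexpansive c T"
    using averaged_imp_strongly_quasi_nonexpansive[OF avg] by blast
  have F: "Fix T \<noteq> {}" using C by blast
  define \<gamma> where "\<gamma> = c / (k\<^sup>2 + c)"
  define \<alpha> where "\<alpha> = sqrt (1 - \<gamma>)"
  define \<beta> where "\<beta> = (1 - \<alpha>)\<^sup>2"
  have denominator: "k\<^sup>2 + c > 0" using c by (simp add: add_nonneg_pos)
  then have \<gamma>: "0 < \<gamma>" "\<gamma> \<le> 1" using c by (auto simp: \<gamma>_def)
  have \<alpha>: "0 \<le> \<alpha>" "\<alpha> < 1" using \<gamma> by (auto simp: \<alpha>_def)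
  have \<beta>: "0 < \<beta>" "\<beta> \<le> 1" using \<alpha> by (auto simp: \<beta>_def power_le_one)
  have estimates: "infdist (T x) (Fix T) \<le> \<alpha> * infdist x (Fix T) \<and>
        \<beta> * (infdist x (Fix T))\<^sup>2 \<le> (infdist x (Fix T) - infdist (T x) (Fix T))\<^sup>2 \<and>
        (infdist x (Fix T) - infdist (T x) (Fix T))\<^sup>2 \<le> (norm (x - T x))\<^sup>2 \<and>
        (infdist (T x) C)\<^sup>2 \<le> (infdist x C)\<^sup>2 - \<gamma> * (infdist x (Fix T))\<^sup>2"
    if x: "x \<in> P" for x
  proof -
    define d d' e where "d = infdist x (Fix T)" and "d' = infdist (T x) (Fix T)"
      and "e = norm (x - T x)"
    have nonneg: "0 \<le> d" "0 \<le> d'" "0 \<le> e"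
      by (simp_all add: d_def d'_def e_def infdist_nonneg)
    have "d \<le> k * e" using regular[OF x] by (simp add: d_def e_def)
    then have "d\<^sup>2 \<le> (k * e)\<^sup>2" using nonneg by (simp add: power_mono)
    also have "\<dots> \<le> (k\<^sup>2 + c) * e\<^sup>2"
      using c by (simp add: power_mult_distrib algebra_simps)
    finally have "c * d\<^sup>2 \<le> c * ((k\<^sup>2 + c) * e\<^sup>2)"
      using c by (intro mult_left_mono) auto
    then have regular_sq: "\<gamma> * d\<^sup>2 \<le> c * e\<^sup>2"
      using denominator by (simp add: \<gamma>_def pos_divide_le_eq algebra_simps)
    have "d'\<^sup>2 \<le> d\<^sup>2 - c * e\<^sup>2"
      unfolding d_def d'_def e_def
      using strongly_quasi_nonexpansive_infdist[OF sqn _ F] c by simp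
    with regular_sq have "d'\<^sup>2 \<le> (1 - \<gamma>) * d\<^sup>2" by (simp add: algebra_simps)
    with nonneg \<gamma> have a: "d' \<le> \<alpha> * d" and b: "\<beta> * d\<^sup>2 \<le> (d - d')\<^sup>2"
      unfolding \<alpha>_def \<beta>_def by (simp_all add: contraction_from_squared_contraction)
    have "\<bar>d - d'\<bar> \<le> e"
      unfolding d_def d'_def e_def
      using infdist_triangle_abs[of x "Fix T" "T x"] by (simp add: dist_norm)
    then have lipschitz: "(d - d')\<^sup>2 \<le> e\<^sup>2"
      by (metis abs_ge_zero power2_abs power_mono)
    have "(infdist (T x) C)\<^sup>2 \<le> (infdist x C)\<^sup>2 - c * e\<^sup>2"
      unfolding e_def using strongly_quasi_nonexpansive_infdist[OF sqn _ C] c by simp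
    with regular_sq have decrease_C: "(infdist (T x) C)\<^sup>2 \<le> (infdist x C)\<^sup>2 - \<gamma> * d\<^sup>2"
      by simp
    show ?thesis
      unfolding d_def[symmetric] d'_def[symmetric] e_def[symmetric]
      using a b lipschitz decrease_C by blast
  qed
  show ?thesis
    using \<alpha> \<beta> \<gamma> estimates unfolding fix_distance_estimates_def by blast
qed

theorem lemma3p7:
  fixes T :: "'a::{real_inner, complete_space} \<Rightarrow> 'a"
    and \<rho> :: real and C :: "'a set"
  assumes "averaged_nonexpansive T"
    and "boundedly_linearly_regular T"
    and "\<rho> > 0"
    and "C \<noteq> {}" and "C \<subseteq> Fix T"
  shows "(\<exists>\<alpha> \<beta> \<gamma>. 0 \<le> \<alpha> \<and> \<alpha> < 1 \<and> 0 < \<beta> \<and> \<beta> \<le> 1 \<and> \<gamma> > 0 \<and>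
           (\<forall>x. norm x \<le> \<rho> \<longrightarrow>
              infdist (T x) (Fix T) \<le> \<alpha> * infdist x (Fix T) \<and>
              \<beta> * (infdist x (Fix T))\<^sup>2 \<le> (infdist x (Fix T) - infdist (T x) (Fix T))\<^sup>2 \<and>
              (infdist x (Fix T) - infdist (T x) (Fix T))\<^sup>2 \<le> (norm (x - T x))\<^sup>2 \<and>
              (infdist (T x) C)\<^sup>2 \<le> (infdist x C)\<^sup>2 - \<gamma> * (infdist x (Fix T))\<^sup>2))
       \<and> (linearly_regular T \<longrightarrow>
          (\<exists>\<alpha> \<beta> \<gamma>. 0 \<le> \<alpha> \<and> \<alpha> < 1 \<and> 0 < \<beta> \<and> \<beta> \<le> 1 \<and> \<gamma> > 0 \<and>
           (\<forall>x.
              infdist (T x) (Fix T) \<le> \<alpha> * infdist x (Fix T) \<and>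
              \<beta> * (infdist x (Fix T))\<^sup>2 \<le> (infdist x (Fix T) - infdist (T x) (Fix T))\<^sup>2 \<and>
              (infdist x (Fix T) - infdist (T x) (Fix T))\<^sup>2 \<le> (norm (x - T x))\<^sup>2 \<and>
              (infdist (T x) C)\<^sup>2 \<le> (infdist x C)\<^sup>2 - \<gamma> * (infdist x (Fix T))\<^sup>2)))"
proof -
  obtain k where bounded_regular: "\<And>x. norm x \<le> \<rho> \<Longrightarrow> infdist x (Fix T) \<le> k * norm (x - T x)"
    using assms(2,3) unfolding boundedly_linearly_regular_def by blast
  have "\<exists>\<alpha> \<beta> \<gamma>. fix_distance_estimates T C {x. norm x \<le> \<rho>} \<alpha> \<beta> \<gamma>"
    by (rule fix_distance_estimates_on_regular_set[where k = k, OF assms(1,4,5)]) (simp add: bounded_regular)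
  moreover have "\<exists>\<alpha> \<beta> \<gamma>. fix_distance_estimates T C UNIV \<alpha> \<beta> \<gamma>" if linear: "linearly_regular T"
  proof -
    obtain k where regular: "\<forall>x. infdist x (Fix T) \<le> k * norm (x - T x)"
      using linear unfolding linearly_regular_def by blast
    show ?thesis
      using regular by (intro fix_distance_estimates_on_regular_set[where k = k, OF assms(1,4,5)]) blast
  qed
  ultimately show ?thesis unfolding fix_distance_estimates_def by simp
qed

end
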